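(* Let $\theta\colon A\to B$ be an $\mathcal O_\infty$-stable $^*$-homomorphism with $A$ separable. Then every non-zero positive element of $\theta(A)$ is properly infinite in $B$.
   Context: A non-zero positive element $b$ of a ${C^*}$-algebra $B$ is properly infinite if $b\oplus b\precsim b\oplus0$ in $M_2(B)$, where $\precsim$ is Cuntz subequivalence ($x\precsim y$ iff $z_n^*yz_n\to x$ for some sequence $z_n$). $B_{(\infty)}=\ell^\infty(\mathbb N,B)/c_0(\mathbb N,B)$; $\theta$ is $\mathcal O_\infty$-stable if $\mathcal O_\infty$ embeds unitally into $(B_{(\infty)}\cap\theta(A)')/\mathrm{Ann}\,\theta(A)$, with $\mathrm{Ann}\,\theta(A)=\{x\in B_{(\infty)}:x\theta(A)=\theta(A)x=0\}$. *)

theory Defs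
  imports "HOL-Analysis.Analysis"
begin

text \<open>The library only has real normed algebras, so complex
scalar multiplication and the involution are added as class parameters.\<close>

class cstar_algebra = banach + real_normed_algebra +
  fixes scaleC :: "complex \<Rightarrow> 'a \<Rightarrow> 'a"
    and cstar :: "'a \<Rightarrow> 'a"
  assumes scaleC_add_right: "scaleC c (x + y) = scaleC c x + scaleC c y"
    and scaleC_add_left: "scaleC (c + d) x = scaleC c x + scaleC d x"
    and scaleC_scaleC: "scaleC c (scaleC d x) = scaleC (c * d) x"
    and scaleC_one: "scaleC 1 x = x"
    and scaleR_scaleC: "scaleR r x = scaleC (complex_of_real r) x"
    and norm_scaleC: "norm (scaleC c x) = cmod c * norm x"
    and mult_scaleC_left: "scaleC c x * y = scaleC c (x * y)"
    and mult_scaleC_right: "x * scaleC c y = scaleC c (x * y)"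
    and cstar_cstar: "cstar (cstar x) = x"
    and cstar_add: "cstar (x + y) = cstar x + cstar y"
    and cstar_scaleC: "cstar (scaleC c x) = scaleC (cnj c) (cstar x)"
    and cstar_mult: "cstar (x * y) = cstar y * cstar x"
    and cstar_identity: "norm (cstar x * x) = (norm x)\<^sup>2"

definition star_hom :: "('a::cstar_algebra \<Rightarrow> 'b::cstar_algebra) \<Rightarrow> bool" where
  "star_hom \<theta> \<longleftrightarrow>
     (\<forall>x y. \<theta> (x + y) = \<theta> x + \<theta> y) \<and>
     (\<forall>c x. \<theta> (scaleC c x) = scaleC c (\<theta> x)) \<and>
     (\<forall>x y. \<theta> (x * y) = \<theta> x * \<theta> y) \<and>
     (\<forall>x. \<theta> (cstar x) = cstar (\<theta> x))"

definition separable_cstar :: "'a::cstar_algebra itself \<Rightarrow> bool" where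
  "separable_cstar _ \<longleftrightarrow> (\<exists>D::'a set. countable D \<and> closure D = UNIV)"

definition positive :: "'a::cstar_algebra \<Rightarrow> bool" where
  "positive b \<longleftrightarrow> (\<exists>x. b = cstar x * x)"

type_synonym 'a m2 = "bool \<Rightarrow> bool \<Rightarrow> 'a"
  \<comment> \<open>index False = first row/column, True = second\<close>

definition m2_mult :: "'a::cstar_algebra m2 \<Rightarrow> 'a m2 \<Rightarrow> 'a m2" where
  "m2_mult X Y = (\<lambda>i j. X i False * Y False j + X i True * Y True j)"

definition m2_star :: "'a::cstar_algebra m2 \<Rightarrow> 'a m2" where
  "m2_star X = (\<lambda>i j. cstar (X j i))"

definition m2_diag :: "'a::cstar_algebra \<Rightarrow> 'a \<Rightarrow> 'a m2" where
  "m2_diag a b = (\<lambda>i j. if i = j then (if i then b else a) else 0)"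

text \<open>Norm convergence in \<open>M_2(B)\<close> (for its C*-norm) is entrywise convergence.\<close>
definition cuntz_below :: "'a::cstar_algebra m2 \<Rightarrow> 'a m2 \<Rightarrow> bool" where
  "cuntz_below X Y \<longleftrightarrow>
     (\<exists>z :: nat \<Rightarrow> 'a m2. \<forall>i j.
        (\<lambda>n. m2_mult (m2_mult (m2_star (z n)) Y) (z n) i j) \<longlonglongrightarrow> X i j)"

definition properly_infinite :: "'a::cstar_algebra \<Rightarrow> bool" where
  "properly_infinite b \<longleftrightarrow> b \<noteq> 0 \<and> positive b \<and>
     cuntz_below (m2_diag b b) (m2_diag b 0)"

text \<open>Elements of \<open>B_(\<infinity>) = \<ell>\<^sup>\<infinity>(\<nat>,B)/c\<^sub>0(\<nat>,B)\<close> are represented by bounded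
sequences.  \<open>rel_comm \<theta> x\<close>: the class of x lies in \<open>B_(\<infinity>) \<inter> \<theta>(A)'\<close>.
\<open>ann \<theta> x\<close>: the class of x lies in \<open>Ann \<theta>(A)\<close> (this contains \<open>c\<^sub>0\<close>).\<close>

definition rel_comm :: "('a::cstar_algebra \<Rightarrow> 'b::cstar_algebra) \<Rightarrow> (nat \<Rightarrow> 'b) \<Rightarrow> bool" where
  "rel_comm \<theta> x \<longleftrightarrow> bounded (range x) \<and>
     (\<forall>a. (\<lambda>n. x n * \<theta> a - \<theta> a * x n) \<longlonglongrightarrow> 0)"

definition ann :: "('a::cstar_algebra \<Rightarrow> 'b::cstar_algebra) \<Rightarrow> (nat \<Rightarrow> 'b) \<Rightarrow> bool" where
  "ann \<theta> x \<longleftrightarrow> bounded (range x) \<and>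
     (\<forall>a. (\<lambda>n. x n * \<theta> a) \<longlonglongrightarrow> 0 \<and> (\<lambda>n. \<theta> a * x n) \<longlonglongrightarrow> 0)"

text \<open>\<open>O\<^sub>\<infinity>\<close> embeds unitally into \<open>D = (B_(\<infinity>) \<inter> \<theta>(A)')/Ann \<theta>(A)\<close>:
by the universal property of \<open>O\<^sub>\<infinity>\<close> (generated by isometries \<open>s\<^sub>i\<close> with
\<open>s\<^sub>i\<^sup>* s\<^sub>j = \<delta>\<^sub>i\<^sub>j 1\<close>) and its simplicity, this means: D is unital with non-zero
unit (represented by e) and contains such a sequence of isometries
(represented by the \<open>s i\<close>).\<close>

definition Oinf_stable :: "('a::cstar_algebra \<Rightarrow> 'b::cstar_algebra) \<Rightarrow> bool" where
  "Oinf_stable \<theta> \<longleftrightarrow>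
     (\<exists>(e :: nat \<Rightarrow> 'b) (s :: nat \<Rightarrow> nat \<Rightarrow> 'b).
        rel_comm \<theta> e \<and> \<not> ann \<theta> e \<and>
        (\<forall>x. rel_comm \<theta> x \<longrightarrow>
              ann \<theta> (\<lambda>n. e n * x n - x n) \<and> ann \<theta> (\<lambda>n. x n * e n - x n)) \<and>
        (\<forall>i. rel_comm \<theta> (s i)) \<and>
        (\<forall>i j. ann \<theta> (\<lambda>n. cstar (s i n) * s j n - (if i = j then e n else 0))))"

end

theory Submission
  imports Defs "HOL-Computational_Algebra.Polynomial"
begin

text \<open>Let \<open>b = \<theta> a\<close>. \<open>O\<^sub>\<infinity>\<close>-stability provides isometries \<open>s\<^sub>0, s\<^sub>1\<close> of the quotient
  \<open>(B\<^sub>\<infinity> \<inter> \<theta>(A)')/Ann \<theta>(A)\<close>; once its unit is known to act as the identity on \<open>\<theta>(A)\<close>, their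
  representing sequences satisfy \<open>s\<^sub>i\<^sup>* b s\<^sub>j \<longrightarrow> \<delta>\<^sub>i\<^sub>j b\<close>, and the row \<open>(s\<^sub>0, s\<^sub>1)\<close>
  witnesses \<open>b \<oplus> b \<lesssim> b \<oplus> 0\<close>. The unit acts as the identity on \<open>\<theta>(A)\<close> because
  \<open>\<theta>(A)\<close> has a bounded approximate unit, which lies in the relative commutant; for
  separable \<open>A\<close> it is obtained from approximate units of finite sets, transported to the
  closure by the contractivity of \<theta>.

  Both the approximate units and the contractivity are proved without functional calculus.
  For self-adjoint \<open>h\<close> with \<open>\<parallel>h\<parallel> \<le> 1\<close> the binomial series gives \<open>w = sqrt (1 - h\<^sup>2)\<close> in the
  unitization, and \<open>U = h + i w\<close> is unitary. Then \<open>w\<^sup>2\<^sup>N h\<close> is \<open>U\<^sup>*\<^sup>2\<^sup>N\<^sup>+\<^sup>1\<close> times a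
  polynomial in \<open>U\<close> that is uniformly small on the unit circle, and Parseval's identity
  together with the spectral radius formula shows that \<open>\<parallel>w\<^sup>2\<^sup>N h\<parallel>\<close> is small.\<close>

lemma power_mult_distrib_commuting:
  fixes a b :: "'a::monoid_mult"
  assumes "a * b = b * a"
  shows "(a * b) ^ n = a ^ n * b ^ n"
proof (induct n)
  case (Suc n)
  have "(a * b) ^ Suc n = a * (b * a ^ n) * b ^ n"
    using Suc by (simp add: mult.assoc)
  also have "\<dots> = a * (a ^ n * b) * b ^ n"
    using power_commuting_commutes[OF assms, of n] by simp
  also have "\<dots> = a ^ Suc n * b ^ Suc n"
    by (simp add: mult.assoc power_commutes)
  finally show ?case .
qed simp

lemma scaleC_zero_left [simp]: "scaleC 0 (x::'a::cstar_algebra) = 0"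
  using scaleC_add_left[of 0 0 x] by simp

lemma scaleC_zero_right [simp]: "scaleC c (0::'a::cstar_algebra) = 0"
  using scaleC_add_right[of c 0 0] by simp

lemma scaleC_minus_left: "scaleC (- c) (x::'a::cstar_algebra) = - scaleC c x"
  using scaleC_add_left[of c "- c" x] by (simp add: add_eq_0_iff)

lemma scaleC_diff_left: "scaleC (c - d) (x::'a::cstar_algebra) = scaleC c x - scaleC d x"
  using scaleC_add_left[of c "- d" x] by (simp add: scaleC_minus_left)

lemma scaleC_two: "scaleC 2 (x::'a::cstar_algebra) = x + x"
  using scaleC_add_left[of 1 1 x] by (simp add: scaleC_one)

lemma cstar_zero [simp]: "cstar (0::'a::cstar_algebra) = 0"
  using cstar_add[of "0::'a" 0] by simp

lemma cstar_minus: "cstar (- (x::'a::cstar_algebra)) = - cstar x"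
  using cstar_add[of x "- x"] by (simp add: add_eq_0_iff)

lemma cstar_diff: "cstar ((x::'a::cstar_algebra) - y) = cstar x - cstar y"
  using cstar_add[of x "- y"] by (simp add: cstar_minus)

lemma cstar_scaleR: "cstar (r *\<^sub>R (x::'a::cstar_algebra)) = r *\<^sub>R cstar x"
  by (simp add: scaleR_scaleC cstar_scaleC)

lemma norm_cstar_le: "norm (x::'a::cstar_algebra) \<le> norm (cstar x)"
proof (cases "x = 0")
  case False
  have "(norm x)\<^sup>2 \<le> norm (cstar x) * norm x"
    using cstar_identity[of x] norm_mult_ineq[of "cstar x" x] by simp
  with False show ?thesis by (simp add: power2_eq_square)
qed simp

lemma norm_cstar [simp]: "norm (cstar (x::'a::cstar_algebra)) = norm x"
  using norm_cstar_le[of x] norm_cstar_le[of "cstar x"] by (simp add: cstar_cstar)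

lemma cstar_identity_right: "norm ((x::'a::cstar_algebra) * cstar x) = (norm x)\<^sup>2"
  using cstar_identity[of "cstar x"] by (simp add: cstar_cstar)

lemma bounded_linear_cstar: "bounded_linear (cstar :: 'a::cstar_algebra \<Rightarrow> 'a)"
  by (rule bounded_linear_intro[where K = 1]) (auto simp: cstar_add cstar_scaleR)

lemma norm_le_if_norm_mult_le:
  fixes x :: "'a::cstar_algebra"
  assumes "K \<ge> 0" and "\<And>y. norm (x * y) \<le> K * norm y"
  shows "norm x \<le> K"
proof (cases "x = 0")
  case False
  have "(norm x)\<^sup>2 \<le> K * norm x"
    using cstar_identity_right[of x] assms(2)[of "cstar x"] by simp
  with False show ?thesis by (simp add: power2_eq_square)
qed (use assms in simp)

lemma star_hom_simps:
  assumes "star_hom \<theta>"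
  shows "\<theta> (x + y) = \<theta> x + \<theta> y" "\<theta> (x * y) = \<theta> x * \<theta> y" "\<theta> (cstar x) = cstar (\<theta> x)"
    "\<theta> (scaleC c x) = scaleC c (\<theta> x)" "\<theta> (r *\<^sub>R x) = r *\<^sub>R \<theta> x"
    "\<theta> 0 = 0" "\<theta> (- x) = - \<theta> x" "\<theta> (x - y) = \<theta> x - \<theta> y"
proof -
  show add: "\<theta> (x + y) = \<theta> x + \<theta> y" for x y
    using assms by (simp add: star_hom_def)
  show "\<theta> (x * y) = \<theta> x * \<theta> y" "\<theta> (cstar x) = cstar (\<theta> x)" "\<theta> (scaleC c x) = scaleC c (\<theta> x)"
    using assms by (simp_all add: star_hom_def)
  then show "\<theta> (r *\<^sub>R x) = r *\<^sub>R \<theta> x"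
    using assms by (simp add: star_hom_def scaleR_scaleC)
  show zero: "\<theta> 0 = 0"
    using add[of 0 0] by simp
  show minus: "\<theta> (- x) = - \<theta> x" for x
    using add[of x "- x"] zero by (simp add: add_eq_0_iff)
  show "\<theta> (x - y) = \<theta> x - \<theta> y"
    using add[of x "- y"] minus[of y] by simp
qed

section \<open>The unitization as an algebra of left multipliers\<close>

text \<open>\<open>Unitization c x\<close> stands for \<open>c 1 + x\<close>.\<close>

datatype 'a unitization = Unitization (scalar_part: complex) (elem_part: 'a)

lemma unitization_eqI: "scalar_part P = scalar_part Q \<Longrightarrow> elem_part P = elem_part Q \<Longrightarrow> P = Q"
  by (cases P; cases Q) auto

instantiation unitization :: (cstar_algebra) ring_1
begin

definition "0 = Unitization 0 0"
definition "1 = Unitization 1 0"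
definition "P + Q = Unitization (scalar_part P + scalar_part Q) (elem_part P + elem_part Q)"
definition "- P = Unitization (- scalar_part P) (- elem_part P)"
definition "P - Q = Unitization (scalar_part P - scalar_part Q) (elem_part P - elem_part Q)"
definition "P * Q = Unitization (scalar_part P * scalar_part Q)
  (scaleC (scalar_part P) (elem_part Q) + scaleC (scalar_part Q) (elem_part P) + elem_part P * elem_part Q)"

instance
proof
  fix a b c :: "'a unitization"
  show "a * b * c = a * (b * c)"
    by (rule unitization_eqI)
      (simp_all add: times_unitization_def scaleC_add_right scaleC_scaleC mult_scaleC_left
        mult_scaleC_right distrib_left distrib_right mult.assoc ac_simps)
  show "(a + b) * c = a * c + b * c" "a * (b + c) = a * b + a * c"
    by (rule unitization_eqI,
        simp_all add: times_unitization_def plus_unitization_def scaleC_add_right scaleC_add_left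
          distrib_left distrib_right ac_simps)+
  show "1 * a = a" "a * 1 = a"
    by (rule unitization_eqI, simp_all add: times_unitization_def one_unitization_def scaleC_one)+
qed (auto simp: plus_unitization_def zero_unitization_def uminus_unitization_def
       minus_unitization_def one_unitization_def intro: unitization_eqI)

end

lemma scalar_part_simps [simp]:
  "scalar_part (0::'a::cstar_algebra unitization) = 0"
  "scalar_part (1::'a unitization) = 1"
  "scalar_part (P + Q) = scalar_part P + scalar_part Q"
  "scalar_part (P - Q) = scalar_part P - scalar_part Q"
  "scalar_part (- P) = - scalar_part P"
  "scalar_part (P * Q) = scalar_part P * scalar_part Q"
  by (simp_all add: zero_unitization_def one_unitization_def plus_unitization_def
      minus_unitization_def uminus_unitization_def times_unitization_def)

lemma elem_part_simps [simp]:
  "elem_part (0::'a::cstar_algebra unitization) = 0"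
  "elem_part (1::'a unitization) = 0"
  "elem_part (P + Q) = elem_part P + elem_part Q"
  "elem_part (P - Q) = elem_part P - elem_part Q"
  "elem_part (- P) = - elem_part P"
  "elem_part (P * Q) = scaleC (scalar_part P) (elem_part Q) + scaleC (scalar_part Q) (elem_part P)
     + elem_part P * elem_part Q"
  by (simp_all add: zero_unitization_def one_unitization_def plus_unitization_def
      minus_unitization_def uminus_unitization_def times_unitization_def)

lemma scalar_part_power [simp]: "scalar_part ((P::'a::cstar_algebra unitization) ^ n) = scalar_part P ^ n"
  by (induct n) auto

definition uscalar :: "complex \<Rightarrow> 'a::cstar_algebra unitization" where
  "uscalar c = Unitization c 0"

definition uelem :: "'a::cstar_algebra \<Rightarrow> 'a unitization" where
  "uelem x = Unitization 0 x"

definition uadjoint :: "'a::cstar_algebra unitization \<Rightarrow> 'a unitization" where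
  "uadjoint P = Unitization (cnj (scalar_part P)) (cstar (elem_part P))"

definition lmult :: "'a::cstar_algebra unitization \<Rightarrow> 'a \<Rightarrow> 'a" where
  "lmult P y = scaleC (scalar_part P) y + elem_part P * y"

definition rmult :: "'a::cstar_algebra \<Rightarrow> 'a unitization \<Rightarrow> 'a" where
  "rmult y P = scaleC (scalar_part P) y + y * elem_part P"

lemma unitization_parts_simps [simp]:
  "scalar_part (uscalar c) = c" "elem_part (uscalar c) = 0"
  "scalar_part (uelem x) = 0" "elem_part (uelem x) = x"
  "scalar_part (uadjoint P) = cnj (scalar_part P)" "elem_part (uadjoint P) = cstar (elem_part P)"
  by (simp_all add: uscalar_def uelem_def uadjoint_def)

lemma uscalar_simps [simp]: "uscalar 0 = 0" "uscalar 1 = 1"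
  by (simp_all add: unitization_eqI)

lemma uscalar_add: "uscalar (c + d) = uscalar c + uscalar d"
  by (rule unitization_eqI) simp_all

lemma uscalar_minus: "uscalar (- c) = - uscalar c"
  by (rule unitization_eqI) simp_all

lemma uscalar_mult: "uscalar c * uscalar d = uscalar (c * d)"
  by (rule unitization_eqI) simp_all

lemma uscalar_two_mult: "uscalar 2 * P = P + P"
  by (rule unitization_eqI) (simp_all add: scaleC_two)

lemma uscalar_commute: "uscalar c * P = P * uscalar c"
  by (rule unitization_eqI) simp_all

lemma uscalar_left_commute: "uscalar c * (P * Q) = P * (uscalar c * Q)"
  by (metis mult.assoc uscalar_commute)

lemma uelem_mult: "uelem x * uelem y = uelem (x * y)"
  by (rule unitization_eqI) simp_all

lemma uelem_add: "uelem (x + y) = uelem x + uelem y"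
  by (rule unitization_eqI) simp_all

lemma uelem_diff: "uelem (x - y) = uelem x - uelem y"
  by (rule unitization_eqI) simp_all

lemma uelem_scaleR: "uelem (r *\<^sub>R x) = uscalar (complex_of_real r) * uelem x"
  by (rule unitization_eqI) (simp_all add: scaleR_scaleC)

lemma uadjoint_uadjoint [simp]: "uadjoint (uadjoint P) = P"
  by (rule unitization_eqI) (simp_all add: cstar_cstar)

lemma uadjoint_simps [simp]:
  "uadjoint 1 = 1"
  "uadjoint (uscalar c) = uscalar (cnj c)"
  "uadjoint (uelem x) = uelem (cstar x)"
  by (rule unitization_eqI; simp)+

lemma uadjoint_add: "uadjoint (P + Q) = uadjoint P + uadjoint Q"
  by (rule unitization_eqI) (simp_all add: cstar_add)

lemma uadjoint_diff: "uadjoint (P - Q) = uadjoint P - uadjoint Q"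
  by (rule unitization_eqI) (simp_all add: cstar_diff)

lemma uadjoint_mult: "uadjoint (P * Q) = uadjoint Q * uadjoint P"
  by (rule unitization_eqI) (simp_all add: cstar_add cstar_scaleC cstar_mult ac_simps)

lemma uadjoint_power: "uadjoint (P ^ n) = uadjoint P ^ n"
  by (induct n) (simp_all add: uadjoint_mult power_commutes)

lemma lmult_one [simp]: "lmult 1 y = y"
  by (simp add: lmult_def scaleC_one)

lemma lmult_zero [simp]: "lmult 0 y = 0"
  by (simp add: lmult_def)

lemma lmult_uscalar: "lmult (uscalar c) y = scaleC c y"
  by (simp add: lmult_def)

lemma lmult_uelem: "lmult (uelem x) y = x * y"
  by (simp add: lmult_def)

lemma lmult_mult: "lmult (P * Q) y = lmult P (lmult Q y)"
  by (simp add: lmult_def scaleC_add_right scaleC_add_left scaleC_scaleC mult_scaleC_left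
      mult_scaleC_right distrib_left distrib_right mult.assoc ac_simps)

lemma lmult_add: "lmult (P + Q) y = lmult P y + lmult Q y"
  by (simp add: lmult_def scaleC_add_left distrib_right ac_simps)

lemma lmult_diff: "lmult (P - Q) y = lmult P y - lmult Q y"
  by (simp add: lmult_def scaleC_diff_left left_diff_distrib)

lemma lmult_sum: "lmult (sum f A) y = (\<Sum>i\<in>A. lmult (f i) y)"
  by (induct A rule: infinite_finite_induct) (auto simp: lmult_add)

lemma lmult_scaleR: "lmult P (r *\<^sub>R y) = r *\<^sub>R lmult P y"
  by (simp add: lmult_def scaleR_scaleC scaleC_scaleC mult_scaleC_right scaleC_add_right mult.commute)

lemma lmult_mult_right: "lmult P (y * z) = lmult P y * z"
  by (simp add: lmult_def mult_scaleC_left distrib_right mult.assoc)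

lemma mult_lmult: "y * lmult P z = rmult y P * z"
  by (simp add: lmult_def rmult_def mult_scaleC_left mult_scaleC_right distrib_left distrib_right
      mult.assoc)

lemma mult_rmult: "x * rmult y P = rmult (x * y) P"
  by (simp add: rmult_def mult_scaleC_right distrib_left mult.assoc)

lemma cstar_lmult: "cstar (lmult P y) = rmult (cstar y) (uadjoint P)"
  by (simp add: lmult_def rmult_def cstar_add cstar_scaleC cstar_mult)

lemma rmult_eq_lmult_if_commute:
  assumes "uelem x * P = P * uelem x"
  shows "rmult x P = lmult P x"
proof -
  from assms have "elem_part (uelem x * P) = elem_part (P * uelem x)"
    by simp
  then show ?thesis
    by (simp add: rmult_def lmult_def)
qed

text \<open>The C*-norm of the unitization is never constructed: \<open>lmult_bounded P K\<close> bounds \<open>P\<close>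
  by \<open>K\<close> as a left multiplier on the algebra instead.\<close>

definition lmult_bounded :: "'a::cstar_algebra unitization \<Rightarrow> real \<Rightarrow> bool" where
  "lmult_bounded P K \<longleftrightarrow> (\<forall>y. norm (lmult P y) \<le> K * norm y)"

lemma lmult_bounded_one: "lmult_bounded 1 1"
  by (simp add: lmult_bounded_def)

lemma lmult_bounded_mono: "lmult_bounded P K \<Longrightarrow> K \<le> L \<Longrightarrow> lmult_bounded P L"
  unfolding lmult_bounded_def by (meson mult_right_mono norm_ge_zero order_trans)

lemma lmult_bounded_mult:
  "lmult_bounded P K \<Longrightarrow> lmult_bounded Q L \<Longrightarrow> K \<ge> 0 \<Longrightarrow> lmult_bounded (P * Q) (K * L)"
  unfolding lmult_bounded_def lmult_mult
  by (metis (no_types, opaque_lifting) mult.assoc mult_left_mono order_trans)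

lemma lmult_bounded_power: "lmult_bounded P K \<Longrightarrow> K \<ge> 0 \<Longrightarrow> lmult_bounded (P ^ n) (K ^ n)"
  by (induct n) (auto simp: lmult_bounded_one intro: lmult_bounded_mult)

lemma norm_le_if_lmult_bounded:
  "lmult_bounded (uelem x) K \<Longrightarrow> K \<ge> 0 \<Longrightarrow> norm x \<le> K"
  by (rule norm_le_if_norm_mult_le) (simp_all add: lmult_bounded_def lmult_uelem)

lemma norm_lmult_isometry:
  assumes "uadjoint U * U = 1"
  shows "norm (lmult U y) = norm y"
proof -
  have "(norm (lmult U y))\<^sup>2 = norm (cstar (lmult U y) * lmult U y)"
    by (simp add: cstar_identity)
  also have "\<dots> = norm (cstar y * lmult (uadjoint U * U) y)"
    by (simp add: cstar_lmult mult_lmult lmult_mult)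
  also have "\<dots> = (norm y)\<^sup>2"
    using assms by (simp add: cstar_identity)
  finally show ?thesis
    by (simp add: power2_eq_iff_nonneg)
qed

lemma lmult_bounded_isometry: "uadjoint U * U = 1 \<Longrightarrow> lmult_bounded U 1"
  by (simp add: lmult_bounded_def norm_lmult_isometry)

lemma lmult_bounded_uadjoint:
  assumes "lmult_bounded P K" and "K \<ge> 0"
  shows "lmult_bounded (uadjoint P) K"
  unfolding lmult_bounded_def
proof
  fix y
  let ?z = "lmult (uadjoint P) y"
  have "(norm ?z)\<^sup>2 = norm (cstar y * lmult P ?z)"
    by (simp add: cstar_identity[symmetric] cstar_lmult mult_lmult)
  also have "\<dots> \<le> norm y * norm (lmult P ?z)"
    using norm_mult_ineq[of "cstar y" "lmult P ?z"] by simp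
  also have "\<dots> \<le> norm y * (K * norm ?z)"
    using assms(1) unfolding lmult_bounded_def by (simp add: mult_left_mono)
  finally have "norm ?z * norm ?z \<le> (K * norm y) * norm ?z"
    by (simp add: power2_eq_square ac_simps)
  then show "norm ?z \<le> K * norm y"
    using assms(2) by (cases "norm ?z = 0") auto
qed

lemma lmult_bounded_self_adjoint_sqrt:
  assumes "uadjoint P = P" and "lmult_bounded (P * P) c" and "c \<ge> 0"
  shows "lmult_bounded P (sqrt c)"
  unfolding lmult_bounded_def
proof
  fix y
  have "(norm (lmult P y))\<^sup>2 = norm (cstar y * lmult (P * P) y)"
    using assms(1) by (simp add: cstar_identity[symmetric] cstar_lmult mult_lmult lmult_mult)
  also have "\<dots> \<le> norm y * norm (lmult (P * P) y)"
    using norm_mult_ineq[of "cstar y" "lmult (P * P) y"] by simp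
  also have "\<dots> \<le> norm y * (c * norm y)"
    using assms(2) unfolding lmult_bounded_def by (simp add: mult_left_mono)
  also have "\<dots> = (sqrt c * norm y)\<^sup>2"
    using assms(3) by (simp add: power_mult_distrib power2_eq_square)
  finally show "norm (lmult P y) \<le> sqrt c * norm y"
    by (rule power2_le_imp_le) (use assms(3) in simp)
qed

lemma lmult_bounded_of_power_two_power:
  assumes "uadjoint P = P" and "K \<ge> 0" and "lmult_bounded (P ^ 2 ^ m) (K ^ 2 ^ m)"
  shows "lmult_bounded P K"
  using assms
proof (induct m arbitrary: P K)
  case (Suc m)
  have "P ^ 2 ^ Suc m = (P * P) ^ 2 ^ m" and "K ^ 2 ^ Suc m = (K\<^sup>2) ^ 2 ^ m"
    by (simp_all add: power_mult power2_eq_square[symmetric] mult.commute)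
  with Suc have "lmult_bounded (P * P) (K\<^sup>2)"
    by (metis uadjoint_mult zero_le_power2)
  then have "lmult_bounded P (sqrt (K\<^sup>2))"
    by (rule lmult_bounded_self_adjoint_sqrt[OF Suc.prems(1)]) simp
  with Suc.prems(2) show ?case
    by simp
qed simp

section \<open>A square root without functional calculus\<close>

text \<open>The coefficients of \<open>1 - sqrt (1 - x) = (\<Sum>n. c\<^sub>n x\<^sup>n\<^sup>+\<^sup>1)\<close>, determined by the
  equation \<open>t = (x + t\<^sup>2) / 2\<close> for this series.\<close>

fun sqrt_coeff :: "nat \<Rightarrow> real" where
  "sqrt_coeff 0 = 1 / 2"
| "sqrt_coeff (Suc n) = (\<Sum>i\<le>n. sqrt_coeff i * sqrt_coeff (n - i)) / 2"

lemma sqrt_coeff_nonneg: "sqrt_coeff n \<ge> 0"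
  by (induct n rule: sqrt_coeff.induct) (auto intro!: sum_nonneg)

lemma sum_sqrt_coeff_le_one: "(\<Sum>n\<le>N. sqrt_coeff n) \<le> 1"
proof (induct N)
  case (Suc N)
  let ?s = "\<Sum>n\<le>N. sqrt_coeff n"
  have "(\<Sum>k\<le>N. \<Sum>i\<le>k. sqrt_coeff i * sqrt_coeff (k - i))
      = (\<Sum>(i, j)\<in>{(i, j). i + j \<le> N}. sqrt_coeff i * sqrt_coeff j)"
    by (rule sum.triangle_reindex_eq[symmetric])
  also have "\<dots> \<le> (\<Sum>(i, j)\<in>{..N} \<times> {..N}. sqrt_coeff i * sqrt_coeff j)"
    by (rule sum_mono2) (auto simp: sqrt_coeff_nonneg)
  also have "\<dots> = ?s * ?s"
    by (simp add: sum_product sum.cartesian_product)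
  also have "\<dots> \<le> 1"
    using Suc sum_nonneg[of "{..N}" sqrt_coeff] sqrt_coeff_nonneg by (simp add: mult_le_one)
  finally have "(\<Sum>k\<le>N. \<Sum>i\<le>k. sqrt_coeff i * sqrt_coeff (k - i)) \<le> 1" .
  then show ?case
    by (simp add: sum.atMost_Suc_shift sum_divide_distrib[symmetric] del: sum.atMost_Suc)
qed simp

lemma summable_sqrt_coeff: "summable sqrt_coeff"
proof (rule summableI_nonneg_bounded[where x = 1])
  show "sum sqrt_coeff {..<n} \<le> 1" for n
    using sum_sqrt_coeff_le_one[of "n - 1"] by (cases n) (simp_all add: lessThan_Suc_atMost)
qed (rule sqrt_coeff_nonneg)

text \<open>\<open>succ_power x n = x ^ (n + 1)\<close>, since the algebra need not be unital.\<close>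

primrec succ_power :: "'a::semigroup_mult \<Rightarrow> nat \<Rightarrow> 'a" where
  "succ_power x 0 = x"
| "succ_power x (Suc n) = x * succ_power x n"

lemma succ_power_commute:
  assumes "x * y = y * x"
  shows "succ_power x n * y = y * succ_power x n"
proof (induct n)
  case (Suc n)
  then show ?case
    by (simp add: mult.assoc) (metis assms mult.assoc)
qed (use assms in simp)

lemma succ_power_add: "succ_power x i * succ_power x j = succ_power x (i + j + 1)"
  by (induct i) (simp_all add: mult.assoc succ_power_commute[OF refl])

lemma norm_succ_power_le_one:
  fixes x :: "'a::real_normed_algebra"
  assumes "norm x \<le> 1"
  shows "norm (succ_power x n) \<le> 1"
proof (induct n)
  case (Suc n)
  have "norm (succ_power x (Suc n)) \<le> norm x * norm (succ_power x n)"
    by (simp add: norm_mult_ineq)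
  also have "\<dots> \<le> 1"
    using Suc assms by (simp add: mult_le_one)
  finally show ?case .
qed (use assms in simp)

lemma cstar_succ_power: "cstar x = x \<Longrightarrow> cstar (succ_power x n) = succ_power x n"
  by (induct n) (simp_all add: cstar_mult succ_power_commute[OF refl])

lemma summable_norm_sqrt_series:
  fixes x :: "'a::real_normed_algebra"
  assumes "norm x \<le> 1"
  shows "summable (\<lambda>n. norm (sqrt_coeff n *\<^sub>R succ_power x n))"
proof (rule summable_comparison_test[OF _ summable_sqrt_coeff])
  show "\<exists>N. \<forall>n\<ge>N. norm (norm (sqrt_coeff n *\<^sub>R succ_power x n)) \<le> sqrt_coeff n"
    using norm_succ_power_le_one[OF assms] sqrt_coeff_nonneg by (simp add: mult_left_le)
qed

lemma sqrt_series_convolution: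
  fixes x :: "'a::real_algebra"
  shows "(\<Sum>i\<le>k. (sqrt_coeff i *\<^sub>R succ_power x i) * (sqrt_coeff (k - i) *\<^sub>R succ_power x (k - i)))
    = 2 *\<^sub>R (sqrt_coeff (Suc k) *\<^sub>R succ_power x (Suc k))"
proof -
  have "(\<Sum>i\<le>k. (sqrt_coeff i *\<^sub>R succ_power x i) * (sqrt_coeff (k - i) *\<^sub>R succ_power x (k - i)))
      = (\<Sum>i\<le>k. sqrt_coeff i * sqrt_coeff (k - i)) *\<^sub>R succ_power x (Suc k)"
    by (simp add: succ_power_add scaleR_sum_left ac_simps)
  then show ?thesis
    by simp
qed

lemma exists_one_minus_sqrt:
  fixes h :: "'a::cstar_algebra"
  assumes "norm h \<le> 1" and "cstar h = h"
  shows "\<exists>t. cstar t = t \<and> t * h = h * t \<and> t * t = 2 *\<^sub>R t - h * h"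
proof -
  define f where "f n = sqrt_coeff n *\<^sub>R succ_power (h * h) n" for n
  have "norm (h * h) \<le> 1"
    using assms(1) norm_mult_ineq[of h h] by (smt (verit) mult_le_one norm_ge_zero)
  then have sn: "summable (\<lambda>n. norm (f n))"
    unfolding f_def by (rule summable_norm_sqrt_series)
  then have sf: "summable f"
    by (rule summable_norm_cancel)
  define t where "t = suminf f"
  have "cstar (f n) = f n" for n
    using assms(2) by (simp add: f_def cstar_scaleR cstar_succ_power cstar_mult)
  then have "cstar t = t"
    using bounded_linear.suminf[OF bounded_linear_cstar sf] by (simp add: t_def)
  moreover have "t * h = h * t"
    using suminf_mult2[OF sf, of h] suminf_mult[OF sf, of h]
      succ_power_commute[of "h * h" h, OF mult.assoc]
    by (simp add: t_def f_def)
  moreover have "t * t = 2 *\<^sub>R t - h * h"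
  proof -
    have "t * t = (\<Sum>k. \<Sum>i\<le>k. f i * f (k - i))"
      unfolding t_def by (rule Cauchy_product[OF sn sn])
    also have "\<dots> = (\<Sum>k. 2 *\<^sub>R f (Suc k))"
      by (simp only: f_def sqrt_series_convolution)
    also have "\<dots> = 2 *\<^sub>R (\<Sum>k. f (Suc k))"
      using sf by (simp add: summable_Suc_iff suminf_scaleR_right)
    also have "(\<Sum>k. f (Suc k)) = t - (1/2) *\<^sub>R (h * h)"
      using suminf_split_head[OF sf] by (simp add: t_def f_def)
    finally show ?thesis
      by (simp add: scaleR_diff_right)
  qed
  ultimately show ?thesis
    by blast
qed

lemma lmult_bounded_add:
  assumes "lmult_bounded P K" and "lmult_bounded Q L"
  shows "lmult_bounded (P + Q) (K + L)"
  unfolding lmult_bounded_def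
proof
  fix y
  have "norm (lmult (P + Q) y) \<le> norm (lmult P y) + norm (lmult Q y)"
    unfolding lmult_add by (rule norm_triangle_ineq)
  also have "\<dots> \<le> K * norm y + L * norm y"
    using assms unfolding lmult_bounded_def by (intro add_mono) auto
  finally show "norm (lmult (P + Q) y) \<le> (K + L) * norm y"
    by (simp add: distrib_right)
qed

lemma lmult_bounded_diff:
  assumes "lmult_bounded P K" and "lmult_bounded Q L"
  shows "lmult_bounded (P - Q) (K + L)"
  unfolding lmult_bounded_def
proof
  fix y
  have "norm (lmult (P - Q) y) \<le> norm (lmult P y) + norm (lmult Q y)"
    unfolding lmult_diff by (rule norm_triangle_ineq4)
  also have "\<dots> \<le> K * norm y + L * norm y"
    using assms unfolding lmult_bounded_def by (intro add_mono) auto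
  finally show "norm (lmult (P - Q) y) \<le> (K + L) * norm y"
    by (simp add: distrib_right)
qed

lemma lmult_bounded_uscalar_mult:
  "lmult_bounded P K \<Longrightarrow> lmult_bounded (uscalar c * P) (cmod c * K)"
  unfolding lmult_bounded_def lmult_mult lmult_uscalar norm_scaleC
  by (simp add: mult.assoc mult_left_mono)

lemma unitary_of_commuting_self_adjoint:
  fixes K w :: "'a::cstar_algebra unitization"
  assumes sK: "uadjoint K = K" and sw: "uadjoint w = w" and Kw: "K * w = w * K"
    and KKww: "K * K + w * w = 1"
  defines "U \<equiv> K + uscalar \<i> * w"
  shows "uadjoint U * U = 1" and "U * uadjoint U = 1"
    and "K = uscalar (1/2) * (U + uadjoint U)" and "w = uscalar (\<i> / 2) * (uadjoint U - U)"
proof -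
  let ?iw = "uscalar \<i> * w"
  have sU: "uadjoint U = K - ?iw"
  proof -
    have "uadjoint U = K + w * uscalar (- \<i>)"
      by (simp add: U_def uadjoint_add uadjoint_mult sw sK)
    also have "\<dots> = K - ?iw"
      by (rule unitization_eqI) (simp_all add: scaleC_minus_left)
    finally show ?thesis .
  qed
  have K_iw: "K * ?iw = ?iw * K"
    by (metis mult.assoc uscalar_commute Kw)
  have "uscalar \<i> * uscalar \<i> = (- 1 :: 'a unitization)"
    by (rule unitization_eqI) simp_all
  then have iw_iw: "?iw * ?iw = - (w * w)"
    by (metis mult.assoc uscalar_commute mult_minus1)
  show "uadjoint U * U = 1" "U * uadjoint U = 1"
    using KKww K_iw iw_iw by (simp_all only: sU) (simp_all add: U_def algebra_simps)
  have "U + uadjoint U = uscalar 2 * K"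
    by (simp only: sU uscalar_two_mult) (simp add: U_def)
  then show "K = uscalar (1/2) * (U + uadjoint U)"
    by (simp add: mult.assoc[symmetric] uscalar_mult)
  have "U - uadjoint U = uscalar 2 * ?iw"
    by (simp only: sU uscalar_two_mult) (simp add: U_def)
  then have "U - uadjoint U = uscalar (2 * \<i>) * w"
    by (simp add: mult.assoc[symmetric] uscalar_mult)
  then have "- (U - uadjoint U) = - (uscalar (2 * \<i>) * w)"
    by simp
  then have "uadjoint U - U = uscalar (- (2 * \<i>)) * w"
    by (simp add: uscalar_minus)
  then show "w = uscalar (\<i> / 2) * (uadjoint U - U)"
    by (simp add: mult.assoc[symmetric] uscalar_mult)
qed

text \<open>If \<open>t = 1 - sqrt (1 - k\<^sup>2)\<close>, then \<open>w = 1 - t\<close> is \<open>sqrt (1 - k\<^sup>2)\<close>, so that \<open>k + i w\<close> is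
  unitary.\<close>

lemma cayley_unitary:
  fixes k t :: "'a::cstar_algebra"
  assumes sk: "cstar k = k" and st: "cstar t = t" and comm: "t * k = k * t"
    and sq: "t * t = 2 *\<^sub>R t - k * k"
  defines "w \<equiv> 1 - uelem t" and "U \<equiv> uelem k + uscalar \<i> * (1 - uelem t)"
  shows "uadjoint U * U = 1" and "U * uadjoint U = 1"
    and "uadjoint w = w" and "uelem k * w = w * uelem k"
    and "uelem k = uscalar (1/2) * (U + uadjoint U)"
    and "w = uscalar (\<i> / 2) * (uadjoint U - U)"
proof -
  show sw: "uadjoint w = w"
    by (simp add: w_def uadjoint_diff st)
  show Kw: "uelem k * w = w * uelem k"
    by (simp add: w_def algebra_simps uelem_mult comm)
  have "uelem t * uelem t = uelem t + uelem t - uelem k * uelem k"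
    by (simp add: uelem_mult sq uelem_diff uelem_add scaleR_2)
  then have "uelem k * uelem k + w * w = 1"
    by (simp add: w_def algebra_simps)
  from unitary_of_commuting_self_adjoint[of "uelem k" w, OF _ sw Kw this]
  show "uadjoint U * U = 1" "U * uadjoint U = 1" "uelem k = uscalar (1/2) * (U + uadjoint U)"
    "w = uscalar (\<i> / 2) * (uadjoint U - U)"
    by (simp_all add: sk U_def w_def)
qed

lemma lmult_bounded_cayley_parts:
  fixes k t :: "'a::cstar_algebra"
  assumes "cstar k = k" "cstar t = t" "t * k = k * t" "t * t = 2 *\<^sub>R t - k * k"
  shows "lmult_bounded (uelem k) 1" and "lmult_bounded (1 - uelem t) 1"
proof -
  let ?U = "uelem k + uscalar \<i> * (1 - uelem t)"
  note U = cayley_unitary[OF assms]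
  have "lmult_bounded ?U 1" "lmult_bounded (uadjoint ?U) 1"
    using U(1,2) lmult_bounded_isometry[of ?U] lmult_bounded_isometry[of "uadjoint ?U"] by simp_all
  then have "lmult_bounded (?U + uadjoint ?U) 2" "lmult_bounded (uadjoint ?U - ?U) 2"
    using lmult_bounded_add lmult_bounded_diff by fastforce+
  then have "lmult_bounded (uscalar (1/2) * (?U + uadjoint ?U)) (cmod (1/2) * 2)"
    and "lmult_bounded (uscalar (\<i> / 2) * (uadjoint ?U - ?U)) (cmod (\<i> / 2) * 2)"
    using lmult_bounded_uscalar_mult by blast+
  then have "lmult_bounded (uscalar (1/2) * (?U + uadjoint ?U)) 1"
    and "lmult_bounded (uscalar (\<i> / 2) * (uadjoint ?U - ?U)) 1"
    by (simp_all add: norm_divide)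
  then show "lmult_bounded (uelem k) 1" "lmult_bounded (1 - uelem t) 1"
    using U(5,6) by simp_all
qed

section \<open>Star homomorphisms are contractive\<close>

text \<open>A star homomorphism maps the Cayley unitary of \<open>h\<close> to that of \<open>\<theta> h\<close>.\<close>

lemma norm_star_hom_self_adjoint_le_one:
  fixes \<theta> :: "'a::cstar_algebra \<Rightarrow> 'b::cstar_algebra"
  assumes "star_hom \<theta>" and "cstar h = h" and "norm h \<le> 1"
  shows "norm (\<theta> h) \<le> 1"
proof -
  obtain t where t: "cstar t = t" "t * h = h * t" "t * t = 2 *\<^sub>R t - h * h"
    using exists_one_minus_sqrt[OF assms(3,2)] by blast
  have "lmult_bounded (uelem (\<theta> h)) 1"
    by (rule lmult_bounded_cayley_parts(1)[of _ "\<theta> t"])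
      (simp_all add: star_hom_simps[OF assms(1), symmetric] t assms(2))
  then show ?thesis
    by (rule norm_le_if_lmult_bounded) simp
qed

lemma norm_star_hom_le:
  fixes \<theta> :: "'a::cstar_algebra \<Rightarrow> 'b::cstar_algebra"
  assumes "star_hom \<theta>"
  shows "norm (\<theta> x) \<le> norm x"
proof (cases "x = 0")
  case True
  then show ?thesis
    using star_hom_simps(6)[OF assms] by simp
next
  case False
  let ?h = "(1 / (norm x)\<^sup>2) *\<^sub>R (cstar x * x)"
  have "cstar ?h = ?h" and "norm ?h \<le> 1"
    using False by (simp_all add: cstar_scaleR cstar_mult cstar_cstar cstar_identity)
  then have "norm (\<theta> ?h) \<le> 1"
    by (rule norm_star_hom_self_adjoint_le_one[OF assms])
  then have "(norm (\<theta> x))\<^sup>2 \<le> (norm x)\<^sup>2"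
    using False by (simp add: star_hom_simps[OF assms] cstar_identity field_simps)
  then show ?thesis
    by (rule power2_le_imp_le) simp
qed

lemma bounded_linear_star_hom:
  fixes \<theta> :: "'a::cstar_algebra \<Rightarrow> 'b::cstar_algebra"
  assumes "star_hom \<theta>"
  shows "bounded_linear \<theta>"
  by (rule bounded_linear_intro[where K = 1])
    (simp_all add: star_hom_simps[OF assms] norm_star_hom_le[OF assms])

section \<open>Coefficients of a polynomial bounded on the unit circle\<close>

lemma sum_roots_of_unity_power:
  fixes m :: int
  assumes "n > 0" and "\<bar>m\<bar> < int n"
  shows "(\<Sum>l<n. cis (2 * pi * real l * of_int m / real n)) = (if m = 0 then of_nat n else 0)"
proof (cases "m = 0")
  case False
  define x where "x = cis (2 * pi * of_int m / real n)"
  have powers: "cis (2 * pi * real l * of_int m / real n) = x ^ l" for l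
    unfolding x_def Complex.DeMoivre by (simp add: algebra_simps)
  have "x ^ n = cis (2 * pi * of_int m)"
    using assms(1) by (simp add: x_def Complex.DeMoivre)
  then have "x ^ n = 1"
    by (simp add: cis_multiple_2pi)
  moreover have "x \<noteq> 1"
  proof
    assume "x = 1"
    then have "cos (2 * pi * of_int m / real n) = 1"
      by (simp add: x_def complex_eq_iff)
    then obtain k :: int where "2 * pi * of_int m / real n = real_of_int k * 2 * pi"
      by (auto simp: cos_one_2pi_int)
    with assms(1) have "m = k * int n"
      by (simp add: field_simps) (metis of_int_eq_iff of_int_mult of_int_of_nat_eq)
    with assms(2) False show False
      by (cases "k = 0") (auto simp: abs_mult intro: order.trans[OF _ mult_right_mono[of 1 "\<bar>k\<bar>"]])
  qed
  ultimately show ?thesis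
    using False by (simp add: powers sum_gp_strict)
qed simp

lemma sum_roots_of_unity_orthogonal:
  assumes "i < n" and "j < n"
  shows "(\<Sum>l<n. cis (2 * pi * real l / real n) ^ i * cnj (cis (2 * pi * real l / real n) ^ j))
    = (if i = j then of_nat n else 0)"
proof -
  have "cis (2 * pi * real l / real n) ^ i * cnj (cis (2 * pi * real l / real n) ^ j)
      = cis (2 * pi * real l * of_int (int i - int j) / real n)" for l
  proof -
    have "cis (2 * pi * real l / real n) ^ i * cnj (cis (2 * pi * real l / real n) ^ j)
        = cis (real i * (2 * pi * real l / real n)) * cis (- (real j * (2 * pi * real l / real n)))"
      by (simp only: Complex.DeMoivre cis_cnj)
    then show ?thesis
      by (simp add: cis_mult algebra_simps add_divide_distrib diff_divide_distrib)
  qed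
  moreover have "\<bar>int i - int j\<bar> < int n"
    using assms by auto
  ultimately show ?thesis
    using sum_roots_of_unity_power[of n "int i - int j"] assms by simp
qed

lemma parseval_roots_of_unity:
  fixes q :: "complex poly"
  assumes "degree q < n"
  shows "(\<Sum>l<n. (cmod (poly q (cis (2 * pi * real l / real n))))\<^sup>2)
       = real n * (\<Sum>i\<le>degree q. (cmod (coeff q i))\<^sup>2)"
proof -
  define D where "D = degree q"
  define c where "c = coeff q"
  define z where "z l = cis (2 * pi * real l / real n)" for l
  have "complex_of_real (\<Sum>l<n. (cmod (poly q (z l)))\<^sup>2)
      = (\<Sum>l<n. \<Sum>i\<le>D. \<Sum>j\<le>D. c i * cnj (c j) * (z l ^ i * cnj (z l ^ j)))"
    unfolding of_real_sum complex_norm_square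
    by (simp add: poly_altdef D_def c_def sum_product cnj_sum algebra_simps)
  also have "\<dots> = (\<Sum>i\<le>D. \<Sum>j\<le>D. c i * cnj (c j) * (\<Sum>l<n. z l ^ i * cnj (z l ^ j)))"
    by (simp only: sum_distrib_left sum.swap[of _ "{..<n}"])
  also have "\<dots> = (\<Sum>i\<le>D. \<Sum>j\<le>D. c i * cnj (c j) * (if i = j then of_nat n else 0))"
  proof (intro sum.cong refl)
    fix i j
    assume "i \<in> {..D}" "j \<in> {..D}"
    then have "i < n" "j < n"
      using assms by (auto simp: D_def)
    then show "c i * cnj (c j) * (\<Sum>l<n. z l ^ i * cnj (z l ^ j))
        = c i * cnj (c j) * (if i = j then of_nat n else 0)"
      unfolding z_def by (simp only: sum_roots_of_unity_orthogonal)
  qed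
  also have "\<dots> = (\<Sum>i\<le>D. c i * cnj (c i) * of_nat n)"
    by (simp add: if_distrib cong: if_cong)
  also have "\<dots> = complex_of_real (real n * (\<Sum>i\<le>D. (cmod (c i))\<^sup>2))"
    by (simp only: of_real_mult of_real_of_nat_eq of_real_sum complex_norm_square sum_distrib_left)
      (simp add: mult_ac)
  finally show ?thesis
    unfolding z_def D_def c_def of_real_eq_iff .
qed

definition coeff_l1_norm :: "complex poly \<Rightarrow> real" where
  "coeff_l1_norm p = (\<Sum>i\<le>degree p. cmod (coeff p i))"

lemma coeff_l1_norm_le:
  fixes q :: "complex poly"
  assumes "\<And>z. cmod z = 1 \<Longrightarrow> cmod (poly q z) \<le> S"
  shows "coeff_l1_norm q \<le> sqrt (real (degree q + 1)) * S"
proof -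
  define n where "n = degree q + 1"
  have S: "S \<ge> 0"
    using order_trans[OF norm_ge_zero assms[of 1]] by simp
  have "(coeff_l1_norm q)\<^sup>2 \<le> real n * (\<Sum>i\<le>degree q. (cmod (coeff q i))\<^sup>2)"
    unfolding coeff_l1_norm_def n_def
    using sum_squared_le_sum_of_squares[of "\<lambda>i. cmod (coeff q i)" "{..degree q}"]
    by (simp add: mult.commute)
  also have "\<dots> = (\<Sum>l<n. (cmod (poly q (cis (2 * pi * real l / real n))))\<^sup>2)"
    using parseval_roots_of_unity[of q n] by (simp add: n_def)
  also have "\<dots> \<le> (\<Sum>l<n. S\<^sup>2)"
    by (intro sum_mono power_mono assms) auto
  also have "\<dots> = (sqrt (real n) * S)\<^sup>2"
    by (simp add: power_mult_distrib)
  finally show ?thesis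
    unfolding n_def by (rule power2_le_imp_le) (simp add: S)
qed

lemma coeff_l1_norm_power_le:
  fixes q :: "complex poly"
  assumes "\<And>z. cmod z = 1 \<Longrightarrow> cmod (poly q z) \<le> S" and "degree q < M"
  shows "coeff_l1_norm (q ^ M) \<le> (2 * S) ^ M"
proof -
  have S: "S \<ge> 0"
    using order_trans[OF norm_ge_zero assms(1)[of 1]] by simp
  have "coeff_l1_norm (q ^ M) \<le> sqrt (real (degree (q ^ M) + 1)) * S ^ M"
    using assms(1) by (intro coeff_l1_norm_le) (simp add: norm_power power_mono)
  also have "sqrt (real (degree (q ^ M) + 1)) \<le> 2 ^ M"
  proof -
    have "degree (q ^ M) + 1 \<le> degree q * M + M"
      using degree_power_le[of q M] assms(2) by simp
    also have "\<dots> = (degree q + 1) * M"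
      by simp
    also have "\<dots> \<le> M * M"
      using assms(2) by (intro mult_le_mono1) simp
    also have "\<dots> \<le> 2 ^ M * 2 ^ M"
      using less_exp[of M] by (intro mult_le_mono) auto
    finally have "real (degree (q ^ M) + 1) \<le> real (2 ^ M * 2 ^ M)"
      by (rule of_nat_mono)
    then have "real (degree (q ^ M) + 1) \<le> (2 ^ M)\<^sup>2"
      by (simp add: power2_eq_square)
    then show ?thesis
      by (simp add: real_le_lsqrt)
  qed
  then have "sqrt (real (degree (q ^ M) + 1)) * S ^ M \<le> 2 ^ M * S ^ M"
    using S by (simp add: mult_right_mono)
  finally show ?thesis
    by (simp add: power_mult_distrib)
qed

definition upoly :: "complex poly \<Rightarrow> 'a::cstar_algebra unitization \<Rightarrow> 'a unitization" where
  "upoly p U = (\<Sum>i\<le>degree p. uscalar (coeff p i) * U ^ i)"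

lemma upoly_eq_sum: "degree p < n \<Longrightarrow> upoly p U = (\<Sum>i<n. uscalar (coeff p i) * U ^ i)"
  unfolding upoly_def by (rule sum.mono_neutral_right[symmetric]) (auto simp: coeff_eq_0)

lemma upoly_0 [simp]: "upoly 0 U = 0"
  by (simp add: upoly_def)

lemma upoly_1 [simp]: "upoly 1 U = 1"
  by (simp add: upoly_def)

lemma upoly_add: "upoly (p + q) U = upoly p U + upoly q U"
proof -
  define n where "n = Suc (max (degree p) (degree q))"
  have "degree (p + q) < n" "degree p < n" "degree q < n"
    using degree_add_le_max[of p q] by (simp_all add: n_def)
  then show ?thesis
    by (simp add: upoly_eq_sum coeff_add uscalar_add distrib_right sum.distrib)
qed

lemma upoly_pCons: "upoly (pCons a p) U = uscalar a + U * upoly p U"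
proof -
  define n where "n = Suc (degree p)"
  have "degree (pCons a p) < Suc n" "degree p < n"
    using degree_pCons_le[of a p] by (simp_all add: n_def)
  then show ?thesis
    by (simp add: upoly_eq_sum sum.lessThan_Suc_shift sum_distrib_left uscalar_left_commute
        del: sum.lessThan_Suc)
qed

lemma upoly_smult: "upoly (smult a p) U = uscalar a * upoly p U"
proof -
  have "degree (smult a p) < Suc (degree p)"
    using degree_smult_le[of a p] by simp
  then show ?thesis
    by (simp add: upoly_eq_sum[of _ "Suc (degree p)"] sum_distrib_left mult.assoc[symmetric]
        uscalar_mult del: sum.lessThan_Suc)
qed

lemma upoly_mult: "upoly (p * q) U = upoly p U * upoly q U"
proof (induct p rule: pCons_induct)
  case (pCons a p)
  then show ?case
    by (simp add: mult_pCons_left upoly_add upoly_smult upoly_pCons distrib_right mult.assoc)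
qed simp

lemma upoly_power: "upoly (p ^ n) U = upoly p U ^ n"
  by (induct n) (simp_all add: upoly_mult)

lemma upoly_commute:
  assumes "V * U = U * V"
  shows "upoly p U * V = V * upoly p U"
proof (induct p rule: pCons_induct)
  case (pCons a p)
  then show ?case
    by (simp add: upoly_pCons distrib_left distrib_right uscalar_commute mult.assoc)
      (metis assms mult.assoc)
qed simp

lemma lmult_bounded_upoly:
  assumes "uadjoint U * U = 1"
  shows "lmult_bounded (upoly p U) (coeff_l1_norm p)"
  unfolding lmult_bounded_def
proof
  fix y
  have "norm (lmult (upoly p U) y) = norm (\<Sum>i\<le>degree p. scaleC (coeff p i) (lmult (U ^ i) y))"
    by (simp add: upoly_def lmult_sum lmult_mult lmult_uscalar)
  also have "\<dots> \<le> (\<Sum>i\<le>degree p. cmod (coeff p i) * norm y)"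
    using lmult_bounded_power[OF lmult_bounded_isometry[OF assms]]
    by (intro norm_sum[THEN order_trans] sum_mono)
      (simp add: norm_scaleC lmult_bounded_def mult_left_mono)
  also have "\<dots> = coeff_l1_norm p * norm y"
    by (simp add: coeff_l1_norm_def sum_distrib_right)
  finally show "norm (lmult (upoly p U) y) \<le> coeff_l1_norm p * norm y" .
qed

section \<open>Contractions that almost annihilate a given element\<close>

text \<open>On the unit circle \<open>re_poly z = z Re z\<close> and \<open>im_poly z = z Im z\<close>; so for a unitary \<open>U\<close>
  the real and imaginary parts of \<open>U\<close> are \<open>U\<^sup>* re_poly U\<close> and \<open>U\<^sup>* im_poly U\<close>.\<close>

definition re_poly :: "complex poly" where
  "re_poly = [:1/2, 0, 1/2:]"

definition im_poly :: "complex poly" where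
  "im_poly = [:\<i> / 2, 0, - \<i> / 2:]"

lemma poly_re_poly_im_poly_circle:
  assumes "cmod z = 1"
  shows "poly re_poly z = z * of_real (Re z)" and "poly im_poly z = z * of_real (Im z)"
proof -
  have z: "z * cnj z = 1"
    using assms complex_norm_square[of z] by simp
  have Re: "complex_of_real (Re z) = (z + cnj z) / 2"
    using complex_add_cnj[of z] by simp
  have Im: "complex_of_real (Im z) = (z - cnj z) / (2 * \<i>)"
    using complex_diff_cnj[of z] by (simp add: field_simps)
  show "poly re_poly z = z * of_real (Re z)"
    unfolding Re using z by (simp add: re_poly_def field_simps)
  show "poly im_poly z = z * of_real (Im z)"
    unfolding Im using z by (simp add: im_poly_def field_simps)
qed

text \<open>Either \<open>\<alpha> \<le> \<eta>\<close> or \<open>\<beta>\<^sup>2 \<le> 1 - \<eta>\<^sup>2\<close>; with \<open>\<alpha> = \<bar>Re z\<bar>\<close>, \<open>\<beta> = \<bar>Im z\<bar>\<close> this makes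
  \<open>\<bar>Re z\<bar> \<bar>Im z\<bar>\<^sup>2\<^sup>N\<close> uniformly small on the circle.\<close>

lemma mult_power_le_of_sum_squares_eq_one:
  fixes \<alpha> \<beta> \<eta> :: real
  assumes "\<alpha> \<ge> 0" "\<beta> \<ge> 0" "\<alpha>\<^sup>2 + \<beta>\<^sup>2 = 1" "\<eta> \<ge> 0" "\<eta> \<le> 1"
  shows "\<alpha> * \<beta> ^ (2 * N) \<le> \<eta> + (1 - \<eta>\<^sup>2) ^ N"
proof -
  have "\<alpha>\<^sup>2 \<le> 1" "\<beta>\<^sup>2 \<le> 1"
    using assms(3) zero_le_power2[of \<alpha>] zero_le_power2[of \<beta>] by linarith+
  then have "\<alpha> \<le> 1" "\<beta> \<le> 1"
    using power2_le_imp_le[of \<alpha> 1] power2_le_imp_le[of \<beta> 1] by simp_all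
  have \<eta>: "0 \<le> 1 - \<eta>\<^sup>2"
    using assms(4,5) by (simp add: power_le_one)
  show ?thesis
  proof (cases "\<alpha> \<le> \<eta>")
    case True
    have "\<alpha> * \<beta> ^ (2 * N) \<le> \<alpha>"
      using \<open>\<beta> \<le> 1\<close> assms(1,2) by (simp add: mult_left_le power_le_one)
    with True \<eta> show ?thesis
      by (smt (verit) zero_le_power)
  next
    case False
    then have "\<beta>\<^sup>2 \<le> 1 - \<eta>\<^sup>2"
      using assms(3,4) power_mono[of \<eta> \<alpha> 2] by linarith
    then have "\<beta> ^ (2 * N) \<le> (1 - \<eta>\<^sup>2) ^ N"
      by (simp add: power_mult power_mono)
    moreover have "\<alpha> * \<beta> ^ (2 * N) \<le> \<beta> ^ (2 * N)"
      using \<open>\<alpha> \<le> 1\<close> assms(1,2) by (simp add: mult_left_le_one_le)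
    ultimately show ?thesis
      using assms(4) by simp
  qed
qed

lemma norm_poly_re_poly_im_poly_power_le:
  assumes "cmod z = 1" and "\<eta> \<ge> 0" and "\<eta> \<le> 1"
  shows "cmod (poly (re_poly * im_poly ^ (2 * N)) z) \<le> \<eta> + (1 - \<eta>\<^sup>2) ^ N"
proof -
  have "\<bar>Re z\<bar>\<^sup>2 + \<bar>Im z\<bar>\<^sup>2 = 1"
    using assms(1) cmod_power2[of z] by simp
  then show ?thesis
    using mult_power_le_of_sum_squares_eq_one[OF abs_ge_zero abs_ge_zero _ assms(2,3)] assms(1)
    by (simp add: poly_re_poly_im_poly_circle norm_mult norm_power power_mult_distrib)
qed

lemma uadjoint_mult_upoly_quadratic:
  assumes "uadjoint U * U = 1"
  shows "uadjoint U * upoly [:a, 0, b:] U = uscalar a * uadjoint U + uscalar b * U"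
proof -
  have "uadjoint U * upoly [:a, 0, b:] U = uadjoint U * uscalar a + (uadjoint U * U) * U * uscalar b"
    by (simp add: upoly_pCons distrib_left mult.assoc)
  then show ?thesis
    using assms by (simp add: uscalar_commute)
qed

lemma uadjoint_mult_upoly_re_poly_im_poly:
  assumes "uadjoint U * U = 1"
  shows "uadjoint U * upoly re_poly U = uscalar (1/2) * (U + uadjoint U)"
    and "uadjoint U * upoly im_poly U = uscalar (\<i> / 2) * (uadjoint U - U)"
  using uadjoint_mult_upoly_quadratic[OF assms]
  by (simp_all add: re_poly_def im_poly_def distrib_left right_diff_distrib add.commute uscalar_minus)

lemma power_mult_upoly_commuting:
  assumes "V * U = U * V"
  shows "(V * upoly p U) ^ n * (V * upoly q U) = V ^ Suc n * upoly (q * p ^ n) U"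
proof -
  have "(V * upoly p U) ^ n = V ^ n * upoly (p ^ n) U"
    by (simp add: power_mult_distrib_commuting upoly_commute[OF assms] upoly_power)
  then have "(V * upoly p U) ^ n * (V * upoly q U) = V ^ n * (upoly (p ^ n) U * V) * upoly q U"
    by (simp only: mult.assoc)
  also have "\<dots> = V ^ n * (V * upoly (p ^ n) U) * upoly q U"
    by (simp only: upoly_commute[OF assms])
  also have "\<dots> = V ^ Suc n * upoly (p ^ n * q) U"
    by (simp only: power_Suc2 mult.assoc upoly_mult)
  finally show ?thesis
    by (simp only: mult.commute[of q])
qed

text \<open>Bounding a self-adjoint polynomial in a unitary by its supremum on the circle: the
  coefficient bound is off by a factor that the \<open>2\<^sup>m\<close>-th root reduces to \<open>2\<close>.\<close>

lemma lmult_bounded_self_adjoint_upoly: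
  assumes "uadjoint U * U = 1" and "U * uadjoint U = 1"
    and "X = uadjoint U ^ D * upoly Q U" and "uadjoint X = X"
    and "\<And>z. cmod z = 1 \<Longrightarrow> cmod (poly Q z) \<le> S"
  shows "lmult_bounded X (2 * S)"
proof -
  let ?V = "uadjoint U" and ?M = "2 ^ degree Q"
  have S: "S \<ge> 0"
    using order_trans[OF norm_ge_zero assms(5)[of 1]] by simp
  have "upoly Q U * ?V = ?V * upoly Q U"
    using assms(1,2) by (intro upoly_commute) simp
  then have "upoly Q U * ?V ^ D = ?V ^ D * upoly Q U"
    using power_commuting_commutes[of ?V "upoly Q U" D] by simp
  then have XM: "X ^ ?M = ?V ^ (D * ?M) * upoly (Q ^ ?M) U"
    by (simp add: assms(3) power_mult_distrib_commuting power_mult upoly_power)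
  have "lmult_bounded (?V ^ (D * ?M)) 1"
    using lmult_bounded_power[OF lmult_bounded_isometry, of ?V] assms(2) by simp
  then have "lmult_bounded (X ^ ?M) (1 * coeff_l1_norm (Q ^ ?M))"
    unfolding XM by (rule lmult_bounded_mult[OF _ lmult_bounded_upoly[OF assms(1)]]) simp
  moreover have "coeff_l1_norm (Q ^ ?M) \<le> (2 * S) ^ ?M"
    by (intro coeff_l1_norm_power_le assms(5) less_exp)
  ultimately have "lmult_bounded (X ^ ?M) ((2 * S) ^ ?M)"
    by (simp add: lmult_bounded_mono)
  then show ?thesis
    using lmult_bounded_of_power_two_power[OF assms(4)] S by simp
qed

lemma norm_lmult_sqrt_complement_power_le:
  fixes h t :: "'a::cstar_algebra"
  assumes "cstar h = h" "cstar t = t" "t * h = h * t" "t * t = 2 *\<^sub>R t - h * h"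
    and "\<eta> \<ge> 0" and "\<eta> \<le> 1"
  shows "norm (lmult ((1 - uelem t) ^ (2 * N)) h) \<le> 2 * (\<eta> + (1 - \<eta>\<^sup>2) ^ N)"
proof -
  define U where "U = uelem h + uscalar \<i> * (1 - uelem t)"
  define X where "X = (1 - uelem t) ^ (2 * N) * uelem h"
  note cayley = cayley_unitary[OF assms(1-4), folded U_def]
  have "X = (uadjoint U * upoly im_poly U) ^ (2 * N) * (uadjoint U * upoly re_poly U)"
    by (simp add: X_def cayley uadjoint_mult_upoly_re_poly_im_poly)
  also have "\<dots> = uadjoint U ^ Suc (2 * N) * upoly (re_poly * im_poly ^ (2 * N)) U"
    using cayley(1,2) by (simp add: power_mult_upoly_commuting)
  finally have X: "X = uadjoint U ^ Suc (2 * N) * upoly (re_poly * im_poly ^ (2 * N)) U" .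
  have "(1 - uelem t) ^ (2 * N) * uelem h = uelem h * (1 - uelem t) ^ (2 * N)"
    by (rule power_commuting_commutes) (rule cayley(4)[symmetric])
  then have "uadjoint X = X"
    by (simp only: X_def uadjoint_mult uadjoint_power cayley(3) uadjoint_simps assms(1))
  with cayley(1,2) X have "lmult_bounded X (2 * (\<eta> + (1 - \<eta>\<^sup>2) ^ N))"
    by (rule lmult_bounded_self_adjoint_upoly) (rule norm_poly_re_poly_im_poly_power_le[OF _ assms(5,6)])
  moreover have "lmult (uelem (lmult ((1 - uelem t) ^ (2 * N)) h)) y = lmult X y" for y
    by (simp add: X_def lmult_uelem lmult_mult lmult_mult_right[symmetric])
  ultimately have "lmult_bounded (uelem (lmult ((1 - uelem t) ^ (2 * N)) h)) (2 * (\<eta> + (1 - \<eta>\<^sup>2) ^ N))"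
    by (simp add: lmult_bounded_def)
  moreover have "0 \<le> 2 * (\<eta> + (1 - \<eta>\<^sup>2) ^ N)"
    using assms(5,6) by (simp add: power_le_one)
  ultimately show ?thesis
    by (rule norm_le_if_lmult_bounded)
qed

lemma exists_commuting_contraction_small_on_self_adjoint:
  fixes h :: "'a::cstar_algebra"
  assumes "cstar h = h" and "norm h \<le> 1" and "\<epsilon> > 0"
  obtains W where "scalar_part W = 1" "uadjoint W = W" "lmult_bounded W 1"
    "uelem h * W = W * uelem h" "norm (lmult (W * W) h) \<le> \<epsilon>"
proof -
  obtain t where t: "cstar t = t" "t * h = h * t" "t * t = 2 *\<^sub>R t - h * h"
    using exists_one_minus_sqrt[OF assms(2,1)] by blast
  define w where "w = 1 - uelem t"
  define \<eta> where "\<eta> = min 1 (\<epsilon> / 4)"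
  have \<eta>: "0 < \<eta>" "\<eta> \<le> 1" "\<eta> \<le> \<epsilon> / 4"
    using assms(3) by (auto simp: \<eta>_def)
  have "1 - \<eta>\<^sup>2 < 1" "\<epsilon> / 4 > 0"
    using \<eta>(1) assms(3) by simp_all
  then obtain N where N: "(1 - \<eta>\<^sup>2) ^ N < \<epsilon> / 4"
    using real_arch_pow_inv by blast
  note cayley = cayley_unitary[OF assms(1) t]
  show ?thesis
  proof (rule that[of "w ^ N"])
    show "scalar_part (w ^ N) = 1"
      by (simp add: w_def)
    show "uadjoint (w ^ N) = w ^ N"
      using cayley(3) by (simp add: w_def uadjoint_power)
    show "lmult_bounded (w ^ N) 1"
      using lmult_bounded_power[OF lmult_bounded_cayley_parts(2)[OF assms(1) t], of N]
      by (simp add: w_def)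
    have "w * uelem h = uelem h * w"
      using cayley(4)[symmetric] by (simp only: w_def)
    then show "uelem h * w ^ N = w ^ N * uelem h"
      by (rule power_commuting_commutes[symmetric])
    have "w ^ N * w ^ N = (1 - uelem t) ^ (2 * N)"
      by (simp only: w_def mult_2 power_add)
    then have "norm (lmult (w ^ N * w ^ N) h) \<le> 2 * (\<eta> + (1 - \<eta>\<^sup>2) ^ N)"
      using norm_lmult_sqrt_complement_power_le[OF assms(1) t, of \<eta> N] \<eta> by simp
    also have "\<dots> \<le> \<epsilon>"
      using \<eta>(3) N by (simp add: field_simps)
    finally show "norm (lmult (w ^ N * w ^ N) h) \<le> \<epsilon>" .
  qed
qed

lemma norm_lmult_squared_if_commute:
  fixes d :: "'a::cstar_algebra"
  assumes "uadjoint W = W" and "uelem (d * cstar d) * W = W * uelem (d * cstar d)"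
  shows "(norm (lmult W d))\<^sup>2 = norm (lmult (W * W) (d * cstar d))"
proof -
  have "cstar (lmult W d) = rmult (cstar d) W"
    by (simp add: cstar_lmult assms(1))
  then have "lmult W d * cstar (lmult W d) = lmult W (d * rmult (cstar d) W)"
    by (simp only: lmult_mult_right)
  also have "\<dots> = lmult W (rmult (d * cstar d) W)"
    by (simp only: mult_rmult)
  also have "\<dots> = lmult (W * W) (d * cstar d)"
    by (simp only: rmult_eq_lmult_if_commute[OF assms(2)] lmult_mult)
  finally show ?thesis
    by (simp add: cstar_identity_right[symmetric])
qed

text \<open>Applied to \<open>h = d d\<^sup>* / \<parallel>d\<parallel>\<^sup>2\<close>: the C*-identity turns \<open>\<parallel>W d\<parallel>\<^sup>2\<close> into
  \<open>\<parallel>d\<parallel>\<^sup>2 \<parallel>W\<^sup>2 h\<parallel>\<close>, since \<open>W\<close> commutes with \<open>h\<close>.\<close>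

lemma exists_contraction_small_on:
  fixes d :: "'a::cstar_algebra"
  assumes "\<delta> > 0"
  obtains C where "scalar_part C = 1" "lmult_bounded C 1" "norm (lmult C d) \<le> \<delta>"
proof (cases "d = 0")
  case True
  then show ?thesis
    using assms by (intro that[of 1]) (simp_all add: lmult_bounded_one lmult_def)
next
  case False
  define R where "R = (norm d)\<^sup>2"
  have R: "R > 0"
    using False by (simp add: R_def)
  define h where "h = (1 / R) *\<^sub>R (d * cstar d)"
  have "cstar h = h" "norm h \<le> 1"
    using R by (simp_all add: h_def R_def cstar_scaleR cstar_mult cstar_cstar cstar_identity_right)
  moreover have "\<delta>\<^sup>2 / R > 0"
    using assms R by simp
  ultimately obtain W where W: "scalar_part W = 1" "uadjoint W = W" "lmult_bounded W 1"
    "uelem h * W = W * uelem h" "norm (lmult (W * W) h) \<le> \<delta>\<^sup>2 / R"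
    by (rule exists_commuting_contraction_small_on_self_adjoint)
  have dd: "d * cstar d = R *\<^sub>R h"
    using R by (simp add: h_def)
  have dd': "uelem (d * cstar d) = uscalar (complex_of_real R) * uelem h"
    by (simp add: dd uelem_scaleR)
  have "uelem (d * cstar d) * W = uscalar (complex_of_real R) * (uelem h * W)"
    by (simp only: dd' mult.assoc)
  also have "\<dots> = W * uelem (d * cstar d)"
    by (simp only: W(4) dd' uscalar_left_commute)
  finally have "uelem (d * cstar d) * W = W * uelem (d * cstar d)" .
  then have "(norm (lmult W d))\<^sup>2 = R * norm (lmult (W * W) h)"
    using norm_lmult_squared_if_commute[OF W(2)] R by (simp add: dd lmult_scaleR)
  also have "\<dots> \<le> \<delta>\<^sup>2"
    using mult_left_mono[OF W(5), of R] R by simp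
  finally have "norm (lmult W d) \<le> \<delta>"
    by (rule power2_le_imp_le) (use assms in simp)
  with W(1,3) show ?thesis
    by (rule that)
qed

lemma exists_contraction_small_on_finite:
  fixes F :: "'a::cstar_algebra set"
  assumes "finite F" and "\<delta> > 0"
  shows "\<exists>P. scalar_part P = 1 \<and> lmult_bounded P 1 \<and> (\<forall>c\<in>F. norm (lmult P c) \<le> \<delta>)"
  using assms(1)
proof (induct F rule: finite_induct)
  case empty
  show ?case
    by (intro exI[of _ 1]) (simp add: lmult_bounded_one)
next
  case (insert c F)
  then obtain P where P: "scalar_part P = 1" "lmult_bounded P 1" "\<forall>c\<in>F. norm (lmult P c) \<le> \<delta>"
    by blast
  obtain C where C: "scalar_part C = 1" "lmult_bounded C 1" "norm (lmult C (lmult P c)) \<le> \<delta>"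
    using exists_contraction_small_on[OF assms(2)] by blast
  have "norm (lmult C (lmult P c')) \<le> \<delta>" if "c' \<in> F" for c'
    using C(2) P(3) that unfolding lmult_bounded_def by (smt (verit) mult_1)
  then show ?case
    using C P lmult_bounded_mult[OF C(2) P(2)]
    by (intro exI[of _ "C * P"]) (auto simp: lmult_mult)
qed

text \<open>The approximate unit is \<open>v = 1 - P\<^sup>* P\<close> for \<open>P\<close> as in the previous lemma; it lies in the
  algebra because \<open>P\<close> has scalar part \<open>1\<close>.\<close>

lemma exists_approx_unit_finite:
  fixes F :: "'a::cstar_algebra set"
  assumes "finite F" and "\<delta> > 0"
  shows "\<exists>v. norm v \<le> 2 \<and> cstar v = v \<and> (\<forall>c\<in>F. norm (v * c - c) \<le> \<delta>)"
proof -
  obtain P where P: "scalar_part P = 1" "lmult_bounded P 1" "\<forall>c\<in>F. norm (lmult P c) \<le> \<delta>"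
    using exists_contraction_small_on_finite[OF assms] by blast
  define T where "T = uadjoint P * P"
  define v where "v = - elem_part T"
  have T: "lmult T y = y - v * y" for y
    using P(1) by (simp add: lmult_def T_def v_def scaleC_one algebra_simps)
  have bounded_T: "lmult_bounded T 1"
    using lmult_bounded_mult[OF lmult_bounded_uadjoint[OF P(2)] P(2)] by (simp add: T_def)
  have "uadjoint T = T"
    by (simp add: T_def uadjoint_mult)
  then have "cstar (elem_part T) = elem_part T"
    by (metis unitization_parts_simps(6))
  then have "cstar v = v"
    by (simp add: v_def cstar_minus)
  moreover have "norm v \<le> 2"
  proof (rule norm_le_if_norm_mult_le)
    fix y
    have "norm (v * y) \<le> norm y + norm (lmult T y)"
      using norm_triangle_ineq4[of y "lmult T y"] by (simp add: T)
    moreover have "norm (lmult T y) \<le> norm y"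
      using bounded_T by (simp add: lmult_bounded_def)
    ultimately show "norm (v * y) \<le> 2 * norm y"
      by linarith
  qed simp
  moreover have "norm (v * c - c) \<le> \<delta>" if "c \<in> F" for c
  proof -
    have "norm (v * c - c) = norm (lmult (uadjoint P) (lmult P c))"
      by (simp add: T_def[symmetric] lmult_mult[symmetric] T norm_minus_commute)
    also have "\<dots> \<le> norm (lmult P c)"
      using lmult_bounded_uadjoint[OF P(2)] by (simp add: lmult_bounded_def)
    finally show ?thesis
      using P(3) that by fastforce
  qed
  ultimately show ?thesis
    by blast
qed

section \<open>Approximate units\<close>

lemma tendsto_on_closure_if_uniformly_bounded:
  fixes T :: "nat \<Rightarrow> 'a::real_normed_vector \<Rightarrow> 'a"
  assumes "\<And>n. linear (T n)" and "\<And>n y. norm (T n y) \<le> B * norm y"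
    and "\<And>c. c \<in> S \<Longrightarrow> (\<lambda>n. T n c) \<longlonglongrightarrow> c" and "x \<in> closure S"
  shows "(\<lambda>n. T n x) \<longlonglongrightarrow> x"
proof (rule LIMSEQ_I)
  fix r :: real
  assume r: "r > 0"
  define K where "K = \<bar>B\<bar> + 1"
  have K: "K > 0"
    by (simp add: K_def add_nonneg_pos)
  have "r / (2 * K) > 0"
    using r K by simp
  then obtain c where c: "c \<in> S" "dist c x < r / (2 * K)"
    using assms(4) unfolding closure_approachable by blast
  obtain N where N: "\<And>n. n \<ge> N \<Longrightarrow> norm (T n c - c) < r / 2"
    using LIMSEQ_D[OF assms(3)[OF c(1)], of "r / 2"] r by auto
  have "norm (T n x - x) < r" if "n \<ge> N" for n
  proof -
    have "T n x - x = T n (x - c) + (T n c - c) + (c - x)"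
      by (simp add: linear_diff[OF assms(1)])
    then have "norm (T n x - x) \<le> norm (T n (x - c) + (T n c - c)) + norm (c - x)"
      by (simp only: norm_triangle_ineq)
    also have "\<dots> \<le> norm (T n (x - c)) + norm (T n c - c) + norm (x - c)"
      using norm_triangle_ineq[of "T n (x - c)" "T n c - c"] by (simp add: norm_minus_commute)
    also have "\<dots> \<le> K * norm (x - c) + norm (T n c - c)"
      using assms(2)[of n "x - c"] abs_ge_self[of B] mult_right_mono[of B "\<bar>B\<bar>" "norm (x - c)"]
      by (simp add: K_def distrib_right)
    also have "K * norm (x - c) < r / 2"
      using c(2) K by (simp add: dist_norm norm_minus_commute field_simps)
    finally show ?thesis
      using N[OF that] by linarith
  qed
  then show "\<exists>N. \<forall>n\<ge>N. norm (T n x - x) < r"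
    by blast
qed

lemma exists_approx_unit_seq_range:
  fixes f :: "nat \<Rightarrow> 'a::cstar_algebra"
  obtains u where "\<And>n. norm (u n) \<le> 2"
    and "\<And>k. (\<lambda>n. u n * f k) \<longlonglongrightarrow> f k" and "\<And>k. (\<lambda>n. f k * u n) \<longlonglongrightarrow> f k"
proof -
  define F where "F n = f ` {..n} \<union> cstar ` f ` {..n}" for n
  have "\<exists>v. norm v \<le> 2 \<and> cstar v = v \<and> (\<forall>c\<in>F n. norm (v * c - c) \<le> inverse (real (Suc n)))" for n
    by (rule exists_approx_unit_finite) (simp_all add: F_def)
  then obtain u where u: "\<And>n. norm (u n) \<le> 2" "\<And>n. cstar (u n) = u n"
    "\<And>n c. c \<in> F n \<Longrightarrow> norm (u n * c - c) \<le> inverse (real (Suc n))"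
    by metis
  have F: "f k \<in> F n" "cstar (f k) \<in> F n" if "k \<le> n" for k n
    using that by (auto simp: F_def)
  have left: "(\<lambda>n. u n * c) \<longlonglongrightarrow> c" if "c = f k \<or> c = cstar (f k)" for c k
  proof -
    have "\<forall>\<^sub>F n in sequentially. norm (u n * c - c) \<le> inverse (real (Suc n))"
      unfolding eventually_sequentially using that F u(3) by blast
    from Lim_null_comparison[OF this LIMSEQ_inverse_real_of_nat] show ?thesis
      by (simp add: LIM_zero_iff)
  qed
  have "(\<lambda>n. cstar (u n * cstar (f k))) \<longlonglongrightarrow> cstar (cstar (f k))" for k
    using left[of "cstar (f k)" k] by (intro bounded_linear.tendsto[OF bounded_linear_cstar]) simp
  then have right: "(\<lambda>n. f k * u n) \<longlonglongrightarrow> f k" for k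
    by (simp add: cstar_mult cstar_cstar u(2))
  show ?thesis
    using that u(1) left right by blast
qed

lemma exists_approx_unit_seq:
  fixes C :: "'a::cstar_algebra set"
  assumes "countable C"
  obtains u where "\<And>n. norm (u n) \<le> 2"
    and "\<And>c. c \<in> closure C \<Longrightarrow> (\<lambda>n. u n * c) \<longlonglongrightarrow> c"
    and "\<And>c. c \<in> closure C \<Longrightarrow> (\<lambda>n. c * u n) \<longlonglongrightarrow> c"
proof -
  define f where "f = from_nat_into (insert 0 C)"
  have "range f = insert 0 C"
    using assms by (simp add: f_def range_from_nat_into)
  then have closure: "closure C \<subseteq> closure (range f)"
    by (intro closure_mono) blast
  obtain u where u: "\<And>n. norm (u n) \<le> 2"
    "\<And>k. (\<lambda>n. u n * f k) \<longlonglongrightarrow> f k" "\<And>k. (\<lambda>n. f k * u n) \<longlonglongrightarrow> f k"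
    using exists_approx_unit_seq_range by blast
  have bound: "norm (u n * y) \<le> 2 * norm y" "norm (y * u n) \<le> 2 * norm y" for n y
    using norm_mult_ineq[of "u n" y] norm_mult_ineq[of y "u n"]
      mult_right_mono[OF u(1)[of n] norm_ge_zero[of y]] by (simp_all add: mult.commute)
  show ?thesis
  proof (rule that)
    show "norm (u n) \<le> 2" for n
      by (rule u(1))
    show "(\<lambda>n. u n * c) \<longlonglongrightarrow> c" if "c \<in> closure C" for c
    proof (rule tendsto_on_closure_if_uniformly_bounded[where T = "\<lambda>n y. u n * y" and S = "range f"])
      show "linear (\<lambda>y. u n * y)" for n
        by (rule bounded_linear.linear[OF bounded_linear_mult_right])
    qed (use bound(1) u(2) that closure in auto)
    show "(\<lambda>n. c * u n) \<longlonglongrightarrow> c" if "c \<in> closure C" for c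
    proof (rule tendsto_on_closure_if_uniformly_bounded[where T = "\<lambda>n y. y * u n" and S = "range f"])
      show "linear (\<lambda>y. y * u n)" for n
        by (rule bounded_linear.linear[OF bounded_linear_mult_left])
    qed (use bound(2) u(3) that closure in auto)
  qed
qed

lemma star_hom_approx_unit_seq:
  fixes \<theta> :: "'a::cstar_algebra \<Rightarrow> 'b::cstar_algebra"
  assumes "star_hom \<theta>" and "separable_cstar TYPE('a)"
  obtains u where "\<And>n. norm (u n) \<le> 2"
    and "\<And>a. (\<lambda>n. u n * \<theta> a) \<longlonglongrightarrow> \<theta> a" and "\<And>a. (\<lambda>n. \<theta> a * u n) \<longlonglongrightarrow> \<theta> a"
proof -
  obtain D :: "'a set" where D: "countable D" "closure D = UNIV"
    using assms(2) unfolding separable_cstar_def by blast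
  have "\<theta> ` closure D \<subseteq> closure (\<theta> ` D)"
    using bounded_linear_star_hom[OF assms(1)]
    by (intro image_closure_subset closure_subset linear_continuous_on) auto
  then have dense: "\<theta> a \<in> closure (\<theta> ` D)" for a
    using D(2) by blast
  obtain u where u: "\<And>n. norm (u n) \<le> 2"
    "\<And>c. c \<in> closure (\<theta> ` D) \<Longrightarrow> (\<lambda>n. u n * c) \<longlonglongrightarrow> c"
    "\<And>c. c \<in> closure (\<theta> ` D) \<Longrightarrow> (\<lambda>n. c * u n) \<longlonglongrightarrow> c"
    using exists_approx_unit_seq[OF countable_image[OF D(1)]] by blast
  show ?thesis
    by (rule that[of u]) (simp_all add: u dense)
qed

section \<open>Proper infiniteness\<close>

lemma tendsto_zero_bounded_mult:
  fixes x y :: "nat \<Rightarrow> 'a::real_normed_algebra"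
  assumes "bounded (range x)" and "y \<longlonglongrightarrow> 0"
  shows "(\<lambda>n. x n * y n) \<longlonglongrightarrow> 0" and "(\<lambda>n. y n * x n) \<longlonglongrightarrow> 0"
  using assms bounded_bilinear.Bfun_prod_Zfun[OF bounded_bilinear_mult, of x sequentially y]
    bounded_bilinear.Zfun_prod_Bfun[OF bounded_bilinear_mult, of y sequentially x]
  by (simp_all add: Bseq_eq_bounded tendsto_Zfun_iff)

lemma rel_comm_if_approx_unit:
  assumes "\<And>n. norm (u n) \<le> B"
    and "\<And>a. (\<lambda>n. u n * \<theta> a) \<longlonglongrightarrow> \<theta> a" and "\<And>a. (\<lambda>n. \<theta> a * u n) \<longlonglongrightarrow> \<theta> a"
  shows "rel_comm \<theta> u"
  unfolding rel_comm_def
proof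
  show "bounded (range u)"
    using assms(1) by (auto simp: bounded_iff)
  show "\<forall>a. (\<lambda>n. u n * \<theta> a - \<theta> a * u n) \<longlonglongrightarrow> 0"
  proof
    fix a
    show "(\<lambda>n. u n * \<theta> a - \<theta> a * u n) \<longlonglongrightarrow> 0"
      using tendsto_diff[OF assms(2)[of a] assms(3)[of a]] by simp
  qed
qed

text \<open>This is where separability enters: an approximate unit \<open>u\<close> for \<open>\<theta>(A)\<close> lies in the
  relative commutant, so \<open>e u - u\<close> annihilates \<open>\<theta>(A)\<close> asymptotically.\<close>

lemma Oinf_stable_unit_tendsto:
  fixes \<theta> :: "'a::cstar_algebra \<Rightarrow> 'b::cstar_algebra"
  assumes "star_hom \<theta>" and "separable_cstar TYPE('a)"
    and "rel_comm \<theta> e" and "\<And>x. rel_comm \<theta> x \<Longrightarrow> ann \<theta> (\<lambda>n. e n * x n - x n)"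
  shows "(\<lambda>n. e n * \<theta> a) \<longlonglongrightarrow> \<theta> a"
proof -
  obtain u where u: "\<And>n. norm (u n) \<le> 2"
    "\<And>a. (\<lambda>n. u n * \<theta> a) \<longlonglongrightarrow> \<theta> a" "\<And>a. (\<lambda>n. \<theta> a * u n) \<longlonglongrightarrow> \<theta> a"
    using star_hom_approx_unit_seq[OF assms(1,2)] by blast
  have "(\<lambda>n. (e n * u n - u n) * \<theta> a) \<longlonglongrightarrow> 0"
    using assms(4)[OF rel_comm_if_approx_unit[OF u]] unfolding ann_def by blast
  moreover have "(\<lambda>n. \<theta> a - u n * \<theta> a) \<longlonglongrightarrow> 0"
    using tendsto_minus[OF LIM_zero[OF u(2)[of a]]] by simp
  then have "(\<lambda>n. e n * (\<theta> a - u n * \<theta> a)) \<longlonglongrightarrow> 0"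
    using assms(3) by (intro tendsto_zero_bounded_mult(1)) (simp_all add: rel_comm_def)
  moreover have "(\<lambda>n. u n * \<theta> a - \<theta> a) \<longlonglongrightarrow> 0"
    using u(2) by (rule LIM_zero)
  ultimately have "(\<lambda>n. (e n * u n - u n) * \<theta> a + e n * (\<theta> a - u n * \<theta> a) + (u n * \<theta> a - \<theta> a))
      \<longlonglongrightarrow> 0 + 0 + 0"
    by (rule tendsto_add[OF tendsto_add])
  moreover have "(e n * u n - u n) * \<theta> a + e n * (\<theta> a - u n * \<theta> a) + (u n * \<theta> a - \<theta> a)
      = e n * \<theta> a - \<theta> a" for n
    by (simp add: algebra_simps)
  ultimately show ?thesis
    by (simp add: LIM_zero_iff)
qed

lemma Oinf_stable_isometries_tendsto:
  fixes \<theta> :: "'a::cstar_algebra \<Rightarrow> 'b::cstar_algebra"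
  assumes "star_hom \<theta>" and "separable_cstar TYPE('a)" and "Oinf_stable \<theta>"
  obtains s :: "nat \<Rightarrow> nat \<Rightarrow> 'b"
  where "\<And>p q a. (\<lambda>n. cstar (s p n) * \<theta> a * s q n) \<longlonglongrightarrow> (if p = q then \<theta> a else 0)"
proof -
  obtain e :: "nat \<Rightarrow> 'b" and s :: "nat \<Rightarrow> nat \<Rightarrow> 'b" where
    e: "rel_comm \<theta> e" "\<And>x. rel_comm \<theta> x \<Longrightarrow> ann \<theta> (\<lambda>n. e n * x n - x n)"
    and s: "\<And>i. rel_comm \<theta> (s i)"
    and s_ann: "\<And>i j. ann \<theta> (\<lambda>n. cstar (s i n) * s j n - (if i = j then e n else 0))"
    using assms(3) unfolding Oinf_stable_def by blast
  have "(\<lambda>n. cstar (s p n) * \<theta> a * s q n) \<longlonglongrightarrow> (if p = q then \<theta> a else 0)" for p q a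
  proof -
    let ?E = "\<lambda>n. if p = q then e n else 0" and ?b = "if p = q then \<theta> a else 0"
    have "bounded (range (\<lambda>n. cstar (s p n)))"
      using s[of p] by (simp add: rel_comm_def bounded_iff)
    moreover have "(\<lambda>n. s q n * \<theta> a - \<theta> a * s q n) \<longlonglongrightarrow> 0"
      using s[of q] unfolding rel_comm_def by blast
    then have "(\<lambda>n. \<theta> a * s q n - s q n * \<theta> a) \<longlonglongrightarrow> 0"
      using tendsto_minus by fastforce
    ultimately have "(\<lambda>n. cstar (s p n) * (\<theta> a * s q n - s q n * \<theta> a)) \<longlonglongrightarrow> 0"
      by (rule tendsto_zero_bounded_mult(1))
    moreover have "(\<lambda>n. (cstar (s p n) * s q n - ?E n) * \<theta> a) \<longlonglongrightarrow> 0"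
      using s_ann[of p q] unfolding ann_def by blast
    moreover have "(\<lambda>n. ?E n * \<theta> a - ?b) \<longlonglongrightarrow> 0"
      using LIM_zero[OF Oinf_stable_unit_tendsto[OF assms(1,2) e]] by simp
    ultimately have "(\<lambda>n. cstar (s p n) * (\<theta> a * s q n - s q n * \<theta> a)
        + (cstar (s p n) * s q n - ?E n) * \<theta> a + (?E n * \<theta> a - ?b)) \<longlonglongrightarrow> 0 + 0 + 0"
      by (rule tendsto_add[OF tendsto_add])
    moreover have "cstar (s p n) * (\<theta> a * s q n - s q n * \<theta> a)
        + (cstar (s p n) * s q n - ?E n) * \<theta> a + (?E n * \<theta> a - ?b)
        = cstar (s p n) * \<theta> a * s q n - ?b" for n
      by (simp add: algebra_simps)
    ultimately show ?thesis
      by (simp add: LIM_zero_iff)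
  qed
  then show ?thesis
    by (rule that)
qed

text \<open>The witness is the row \<open>z\<^sub>n = (s\<^sub>0 n, s\<^sub>1 n)\<close>, for which \<open>z\<^sub>n\<^sup>* (b \<oplus> 0) z\<^sub>n\<close> is the
  matrix \<open>(s\<^sub>i n\<^sup>* b s\<^sub>j n)\<^sub>i\<^sub>j\<close>.\<close>

lemma cuntz_below_diag_if_isometry_pair:
  fixes b :: "'a::cstar_algebra" and s :: "bool \<Rightarrow> nat \<Rightarrow> 'a"
  assumes "\<And>i j. (\<lambda>n. cstar (s i n) * b * s j n) \<longlonglongrightarrow> (if i = j then b else 0)"
  shows "cuntz_below (m2_diag b b) (m2_diag b 0)"
proof -
  define z where "z n = (\<lambda>k l. if k then 0 else s l n)" for n
  have "m2_mult (m2_mult (m2_star (z n)) (m2_diag b 0)) (z n) i j = cstar (s i n) * b * s j n"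
    for n i j
    by (simp add: z_def m2_mult_def m2_star_def m2_diag_def)
  moreover have "m2_diag b b i j = (if i = j then b else 0)" for i j
    by (simp add: m2_diag_def)
  ultimately show ?thesis
    unfolding cuntz_below_def using assms by (intro exI[of _ z]) simp
qed

theorem lemma4p4:
  fixes \<theta> :: "'a::cstar_algebra \<Rightarrow> 'b::cstar_algebra"
  assumes "star_hom \<theta>"
    and "separable_cstar TYPE('a)"
    and "Oinf_stable \<theta>"
  shows "\<forall>a. positive (\<theta> a) \<and> \<theta> a \<noteq> 0 \<longrightarrow> properly_infinite (\<theta> a)"
proof (intro allI impI)
  obtain s :: "nat \<Rightarrow> nat \<Rightarrow> 'b"
    where s: "\<And>p q x. (\<lambda>n. cstar (s p n) * \<theta> x * s q n) \<longlonglongrightarrow> (if p = q then \<theta> x else 0)"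
    using Oinf_stable_isometries_tendsto[OF assms] by blast
  fix a
  assume "positive (\<theta> a) \<and> \<theta> a \<noteq> 0"
  moreover have "(\<lambda>n. cstar (s (of_bool i) n) * \<theta> a * s (of_bool j) n)
      \<longlonglongrightarrow> (if i = j then \<theta> a else 0)" for i j
    using s[where p = "of_bool i" and q = "of_bool j" and x = a] by (cases i; cases j) simp_all
  then have "cuntz_below (m2_diag (\<theta> a) (\<theta> a)) (m2_diag (\<theta> a) 0)"
    by (rule cuntz_below_diag_if_isometry_pair)
  ultimately show "properly_infinite (\<theta> a)"
    by (simp add: properly_infinite_def)
qed

end
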